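(* There is an absolute constant $c>0$ such that the following holds. For any even $A\ge2$, any $S\ge1$, any $\eta>0$, and any $n>16SA\vee 4\eta^2SA$, and for any estimator $\hat\pi$ that maps a dataset of $n$ context-action-reward triples to a policy $\hat\pi\in\Delta(\mathcal A|\mathcal S)$ with full support, $$\sup_{\text{instances }(\mathcal S,\mathcal A,r,\rho,\pi^{\mathrm{ref}}):\ |\mathcal S|=S,\ |\mathcal A|=A}\ \mathbb E_{\mathcal D\sim P_{\pi^{\mathrm{ref}},r}}\big[\mathrm{SubOpt}(\hat\pi)\big]\ \ge\ c\,\frac{\eta SA}{n}.$$
   Context: An instance is an offline contextual bandit with finite context set $\mathcal S$, finite action set $\mathcal A$, mean reward $r:\mathcal S\times\mathcal A\to[0,1]$, context distribution $\rho\in\Delta(\mathcal S)$, and reference policy $\pi^{\mathrm{ref}}\in\Delta(\mathcal A|\mathcal S)$ with $\pi^{\mathrm{ref}}(a|s)>0$ for all $(s,a)$. The dataset $\mathcal D\sim P_{\pi^{\mathrm{ref}},r}$ consists of $n$ i.i.d. triples $(s_i,a_i,r_i)$ with $s_i\sim\rho$, $a_i\sim\pi^{\mathrm{ref}}(\cdot|s_i)$, $r_i=r(s_i,a_i)+\varepsilon_i$ with i.i.d. mean-zero $1$-subgaussian noise. For $\eta>0$, $J(\pi)=\mathbb E_{s\sim\rho}\big[\sum_a r(s,a)\pi(a|s)-\eta^{-1}\mathrm{KL}(\pi^{\mathrm{ref}}(\cdot|s)\|\pi(\cdot|s))\big]$, $\pi^*=\arg\max_\pi J(\pi)$, and $\mathrm{SubOpt}(\pi)=J(\pi^*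 )-J(\pi)$. *)

theory Defs
  imports "HOL-Probability.Probability"
begin

text \<open>Contexts are {0..<S}, actions are {0..<A} (as natural numbers).
 Policies / reference policy are functions nat => nat => real,
 pi s a = probability of action a in context s.\<close>

definition is_policy :: "nat \<Rightarrow> nat \<Rightarrow> (nat \<Rightarrow> nat \<Rightarrow> real) \<Rightarrow> bool" where
  "is_policy S A \<pi> \<longleftrightarrow> (\<forall>s<S. (\<forall>a<A. 0 < \<pi> s a) \<and> (\<Sum>a<A. \<pi> s a) = 1)"

definition KL :: "nat \<Rightarrow> (nat \<Rightarrow> real) \<Rightarrow> (nat \<Rightarrow> real) \<Rightarrow> real" where
  "KL A p q = (\<Sum>a<A. p a * ln (p a / q a))"

definition J :: "nat \<Rightarrow> nat \<Rightarrow> real \<Rightarrow> (nat \<Rightarrow> nat \<Rightarrow> real) \<Rightarrow> (nat \<Rightarrow> real)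
                 \<Rightarrow> (nat \<Rightarrow> nat \<Rightarrow> real) \<Rightarrow> (nat \<Rightarrow> nat \<Rightarrow> real) \<Rightarrow> real" where
  "J S A \<eta> r \<rho> \<pi>ref \<pi> =
     (\<Sum>s<S. \<rho> s * ((\<Sum>a<A. r s a * \<pi> s a) - KL A (\<pi>ref s) (\<pi> s) / \<eta>))"

text \<open>J(pi*) with pi* the maximiser of J; KL(pi_ref || pi) is infinite unless pi has
 full support, so the maximum is over full-support policies.\<close>
definition SubOpt :: "nat \<Rightarrow> nat \<Rightarrow> real \<Rightarrow> (nat \<Rightarrow> nat \<Rightarrow> real) \<Rightarrow> (nat \<Rightarrow> real)
                 \<Rightarrow> (nat \<Rightarrow> nat \<Rightarrow> real) \<Rightarrow> (nat \<Rightarrow> nat \<Rightarrow> real) \<Rightarrow> real" where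
  "SubOpt S A \<eta> r \<rho> \<pi>ref \<pi> =
     (SUP \<pi>' \<in> {\<pi>'. is_policy S A \<pi>'}. J S A \<eta> r \<rho> \<pi>ref \<pi>') - J S A \<eta> r \<rho> \<pi>ref \<pi>"

definition subgaussian_noise :: "real measure \<Rightarrow> bool" where
  "subgaussian_noise \<nu> \<longleftrightarrow> prob_space \<nu> \<and> sets \<nu> = sets borel \<and>
     integrable \<nu> (\<lambda>x. x) \<and> (\<integral>x. x \<partial>\<nu>) = 0 \<and>
     (\<forall>l::real. integrable \<nu> (\<lambda>x. exp (l * x)) \<and> (\<integral>x. exp (l * x) \<partial>\<nu>) \<le> exp (l\<^sup>2 / 2))"

definition valid_instance :: "nat \<Rightarrow> nat \<Rightarrow> (nat \<Rightarrow> nat \<Rightarrow> real) \<Rightarrow> (nat \<Rightarrow> real)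
                 \<Rightarrow> (nat \<Rightarrow> nat \<Rightarrow> real) \<Rightarrow> real measure \<Rightarrow> bool" where
  "valid_instance S A r \<rho> \<pi>ref \<nu> \<longleftrightarrow>
     (\<forall>s<S. \<forall>a<A. 0 \<le> r s a \<and> r s a \<le> 1) \<and>
     (\<forall>s<S. 0 \<le> \<rho> s) \<and> (\<Sum>s<S. \<rho> s) = 1 \<and>
     is_policy S A \<pi>ref \<and> subgaussian_noise \<nu>"

definition fin_dist :: "nat \<Rightarrow> (nat \<Rightarrow> real) \<Rightarrow> nat measure" where
  "fin_dist k f = density (count_space UNIV) (\<lambda>x. ennreal (if x < k then f x else 0))"

definition triple_space :: "(nat \<times> nat \<times> real) measure" where
  "triple_space = count_space UNIV \<Otimes>\<^sub>M (count_space UNIV \<Otimes>\<^sub>M borel)"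

definition sample_measure :: "nat \<Rightarrow> nat \<Rightarrow> (nat \<Rightarrow> nat \<Rightarrow> real) \<Rightarrow> (nat \<Rightarrow> real)
                 \<Rightarrow> (nat \<Rightarrow> nat \<Rightarrow> real) \<Rightarrow> real measure \<Rightarrow> (nat \<times> nat \<times> real) measure" where
  "sample_measure S A r \<rho> \<pi>ref \<nu> =
     fin_dist S \<rho> \<bind> (\<lambda>s. fin_dist A (\<pi>ref s) \<bind>
       (\<lambda>a. distr \<nu> triple_space (\<lambda>e. (s, a, r s a + e))))"

definition data_space :: "nat \<Rightarrow> (nat \<Rightarrow> nat \<times> nat \<times> real) measure" where
  "data_space n = PiM {..<n} (\<lambda>_. triple_space)"

definition data_measure :: "nat \<Rightarrow> nat \<Rightarrow> nat \<Rightarrow> (nat \<Rightarrow> nat \<Rightarrow> real) \<Rightarrow> (nat \<Rightarrow> real)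
                 \<Rightarrow> (nat \<Rightarrow> nat \<Rightarrow> real) \<Rightarrow> real measure \<Rightarrow> (nat \<Rightarrow> nat \<times> nat \<times> real) measure" where
  "data_measure n S A r \<rho> \<pi>ref \<nu> = PiM {..<n} (\<lambda>_. sample_measure S A r \<rho> \<pi>ref \<nu>)"

definition estimator :: "nat \<Rightarrow> nat \<Rightarrow> nat \<Rightarrow> ((nat \<Rightarrow> nat \<times> nat \<times> real) \<Rightarrow> nat \<Rightarrow> nat \<Rightarrow> real) \<Rightarrow> bool" where
  "estimator n S A \<pi>hat \<longleftrightarrow> (\<forall>D. is_policy S A (\<pi>hat D)) \<and>
     (\<forall>s<S. \<forall>a<A. (\<lambda>D. \<pi>hat D s a) \<in> borel_measurable (data_space n))"

text \<open>Expected suboptimality (nonnegative, so taken as a nonnegative integral).\<close>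
definition risk :: "nat \<Rightarrow> nat \<Rightarrow> nat \<Rightarrow> real \<Rightarrow> ((nat \<Rightarrow> nat \<times> nat \<times> real) \<Rightarrow> nat \<Rightarrow> nat \<Rightarrow> real)
                 \<Rightarrow> (nat \<Rightarrow> nat \<Rightarrow> real) \<Rightarrow> (nat \<Rightarrow> real)
                 \<Rightarrow> (nat \<Rightarrow> nat \<Rightarrow> real) \<Rightarrow> real measure \<Rightarrow> ennreal" where
  "risk n S A \<eta> \<pi>hat r \<rho> \<pi>ref \<nu> =
     (\<integral>\<^sup>+ D. ennreal (SubOpt S A \<eta> r \<rho> \<pi>ref (\<pi>hat D)) \<partial>data_measure n S A r \<rho> \<pi>ref \<nu>)"

end

theory Submission
  imports Defs
begin

text \<open>
  If the reference policy p and a full-support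
  policy q satisfy the first-order condition r(s,a) + p(s,a) / (\<eta> q(s,a)) = \<lambda>(s), then q
  maximises J and SubOpt(\<pi>) is the sum over (s,a) of \<rho>(s) p(s,a) \<phi>(\<pi>(s,a) / q(s,a)) / \<eta>,
  where \<phi>(x) = x - 1 - ln x. Since \<phi>(x / u) + \<phi>(x / v) \<ge> ((u - v) / (u + v))^2, no
  policy is good for two instances whose optima differ, while instances that differ only where
  the data do not look are indistinguishable.

  For \<eta> \<le> 2 and S A \<ge> 4 this yields an Assouad argument over S A / 2 - 1 action pairs, each
  hit by a sample with probability 1 / (2n) and tilting the optimum by 1 \<plusminus> \<eta> / 4 inside the
  pair; a dataset misses a given pair with probability at least 1 / 2. For \<eta> > 2, where
  1 / \<eta> dominates \<eta> S A / n, and for S = 1, A = 2 two instances that differ on a single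
  rare action suffice.
\<close>

section \<open>Noiseless data\<close>

lemma nn_integral_fin_dist:
  "(\<integral>\<^sup>+x. h x \<partial>fin_dist k f) = (\<Sum>x<k. ennreal (f x) * h x)"
proof -
  have "(\<integral>\<^sup>+x. h x \<partial>fin_dist k f) =
     (\<integral>\<^sup>+x. ennreal (if x < k then f x else 0) * h x \<partial>count_space UNIV)"
    unfolding fin_dist_def by (subst nn_integral_density) auto
  also have "\<dots> = (\<Sum>x\<in>{..<k}. ennreal (if x < k then f x else 0) * h x)"
    by (rule nn_integral_count_space') auto
  also have "\<dots> = (\<Sum>x<k. ennreal (f x) * h x)" by (rule sum.cong) auto
  finally show ?thesis .
qed

lemma sets_fin_dist[simp]: "sets (fin_dist k f) = sets (count_space UNIV)"
  unfolding fin_dist_def by simp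

lemma space_fin_dist[simp]: "space (fin_dist k f) = UNIV"
  unfolding fin_dist_def by simp

lemma prob_space_fin_dist:
  assumes "\<forall>x<k. 0 \<le> f x" "(\<Sum>x<k. f x) = 1"
  shows "prob_space (fin_dist k f)"
proof
  have "emeasure (fin_dist k f) (space (fin_dist k f)) = (\<Sum>x<k. ennreal (f x))"
    using nn_integral_fin_dist[where h="\<lambda>_. 1"] by simp
  also have "\<dots> = ennreal (\<Sum>x<k. f x)" using assms(1) by (subst sum_ennreal) auto
  finally show "emeasure (fin_dist k f) (space (fin_dist k f)) = 1" using assms(2) by simp
qed

lemma space_triple_space[simp]: "space triple_space = UNIV"
  unfolding triple_space_def by (simp add: space_pair_measure)

lemma singleton_sets_triple_space: "{x} \<in> sets triple_space"
proof -
  obtain s a v where x: "x = (s, a, v)" by (cases x) auto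
  have "{x} = {s} \<times> ({a} \<times> {v})" using x by auto
  also have "\<dots> \<in> sets triple_space" unfolding triple_space_def
    by (intro pair_measureI) auto
  finally show ?thesis .
qed

lemma sample_measure_noiseless:
  "sample_measure S A r \<rho> p (return borel 0) =
     fin_dist S \<rho> \<bind> (\<lambda>s. fin_dist A (p s) \<bind> (\<lambda>a. return triple_space (s, a, r s a)))"
proof -
  have "distr (return borel 0) triple_space (\<lambda>e. (s, a, r s a + e)) = return triple_space (s, a, r s a)"
    for s a
  proof -
    have "(\<lambda>e::real. (s, a, r s a + e)) \<in> borel \<rightarrow>\<^sub>M triple_space"
      unfolding triple_space_def by measurable
    then show ?thesis by (subst distr_return) auto
  qed
  then show ?thesis unfolding sample_measure_def by simp
qed

lemma return_triple_measurable:
  "(\<lambda>a. return triple_space (s, a, v a)) \<in> fin_dist A q \<rightarrow>\<^sub>M subprob_algebra triple_space"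
  by (auto simp: space_subprob_algebra subprob_space_return measurable_cong_sets[OF sets_fin_dist refl])

lemma fin_dist_bind_return_in_subprob_algebra:
  assumes "\<forall>a<A. 0 \<le> q a" "(\<Sum>a<A. q a) = 1"
  shows "fin_dist A q \<bind> (\<lambda>a. return triple_space (s, a, v a)) \<in> space (subprob_algebra triple_space)"
proof -
  interpret prob_space "fin_dist A q" using prob_space_fin_dist assms by blast
  have "subprob_space (fin_dist A q \<bind> (\<lambda>a. return triple_space (s, a, v a)))"
    by (rule subprob_space_bind[OF subprob_space_axioms return_triple_measurable])
  then show ?thesis by (simp add: space_subprob_algebra)
qed

lemma emeasure_fin_dist_bind_return:
  assumes "X \<in> sets triple_space"
  shows "emeasure (fin_dist A q \<bind> (\<lambda>a. return triple_space (s, a, v a))) X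
     = (\<Sum>a<A. ennreal (q a) * indicator X (s, a, v a))"
  by (subst emeasure_bind[OF _ return_triple_measurable assms])
     (simp_all only: nn_integral_fin_dist emeasure_return[OF assms] space_fin_dist, simp)

text \<open>The hypothesis on p concerns every context s, not only s < S: the inner bind needs a
  probability kernel on the whole count space.\<close>
lemma emeasure_noiseless_sample:
  assumes X: "X \<in> sets triple_space"
    and p: "\<forall>s. (\<forall>a<A. 0 \<le> p s a) \<and> (\<Sum>a<A. p s a) = 1"
  shows "emeasure (sample_measure S A r \<rho> p (return borel 0)) X
     = (\<Sum>s<S. ennreal (\<rho> s) * (\<Sum>a<A. ennreal (p s a) * indicator X (s, a, r s a)))"
proof -
  have "(\<lambda>s. fin_dist A (p s) \<bind> (\<lambda>a. return triple_space (s, a, r s a)))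
     \<in> fin_dist S \<rho> \<rightarrow>\<^sub>M subprob_algebra triple_space"
    using fin_dist_bind_return_in_subprob_algebra p
    by (auto simp: measurable_cong_sets[OF sets_fin_dist refl])
  then show ?thesis unfolding sample_measure_noiseless
    by (subst emeasure_bind[OF _ _ X])
       (auto simp: nn_integral_fin_dist emeasure_fin_dist_bind_return[OF X])
qed

lemma sets_noiseless_sample: "sets (sample_measure S A r \<rho> p (return borel 0)) = sets triple_space"
  unfolding sample_measure_noiseless by (subst sets_bind, subst sets_bind) auto

lemma prob_space_noiseless_sample:
  assumes p: "\<forall>s. (\<forall>a<A. 0 \<le> p s a) \<and> (\<Sum>a<A. p s a) = 1"
    and rho: "\<forall>s<S. 0 \<le> \<rho> s" "(\<Sum>s<S. \<rho> s) = 1"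
  shows "prob_space (sample_measure S A r \<rho> p (return borel 0))"
proof
  let ?M = "sample_measure S A r \<rho> p (return borel 0)"
  have "emeasure ?M (space ?M)
     = (\<Sum>s<S. ennreal (\<rho> s) * (\<Sum>a<A. ennreal (p s a) * indicator UNIV (s, a, r s a)))"
    unfolding sets_eq_imp_space_eq[OF sets_noiseless_sample] space_triple_space
    by (rule emeasure_noiseless_sample[OF _ p]) (metis sets.top space_triple_space)
  also have "\<dots> = (\<Sum>s<S. ennreal (\<rho> s) * ennreal (\<Sum>a<A. p s a))"
    using p by (intro sum.cong refl, subst sum_ennreal[symmetric]) auto
  also have "\<dots> = ennreal (\<Sum>s<S. \<rho> s)"
    using p rho by (subst sum_ennreal[symmetric]) auto
  finally show "emeasure ?M (space ?M) = 1" using rho by simp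
qed

lemma emeasure_noiseless_sample_singleton:
  assumes p: "\<forall>s. (\<forall>a<A. 0 \<le> p s a) \<and> (\<Sum>a<A. p s a) = 1"
    and rho: "\<forall>s<S. 0 \<le> \<rho> s" and s0: "s0 < S" and a0: "a0 < A"
  shows "emeasure (sample_measure S A r \<rho> p (return borel 0)) {(s0, a0, r s0 a0)}
     = ennreal (\<rho> s0 * p s0 a0)"
proof -
  have "ennreal (\<rho> s) * (\<Sum>a<A. ennreal (p s a) * indicator {(s0, a0, r s0 a0)} (s, a, r s a))
      = (if s = s0 then ennreal (\<rho> s0 * p s0 a0) else 0)" for s
  proof -
    have "(\<Sum>a<A. ennreal (p s a) * indicator {(s0, a0, r s0 a0)} (s, a, r s a))
        = (\<Sum>a<A. if s = s0 \<and> a = a0 then ennreal (p s0 a0) else 0)"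
      by (intro sum.cong) (auto simp: indicator_def)
    then show ?thesis using rho s0 p a0 by (simp add: ennreal_mult)
  qed
  then show ?thesis
    using emeasure_noiseless_sample[OF singleton_sets_triple_space p] s0 by simp
qed

definition grid_points :: "nat \<Rightarrow> nat \<Rightarrow> nat \<Rightarrow> (nat \<Rightarrow> nat \<times> nat) set" where
  "grid_points n S A = PiE {..<n} (\<lambda>_. {..<S} \<times> {..<A})"

definition noiseless_dataset ::
    "nat \<Rightarrow> (nat \<Rightarrow> nat \<Rightarrow> real) \<Rightarrow> (nat \<Rightarrow> nat \<times> nat) \<Rightarrow> (nat \<Rightarrow> nat \<times> nat \<times> real)" where
  "noiseless_dataset n r x = restrict (\<lambda>i. (fst (x i), snd (x i), r (fst (x i)) (snd (x i)))) {..<n}"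

definition grid_weight ::
    "nat \<Rightarrow> (nat \<Rightarrow> real) \<Rightarrow> (nat \<Rightarrow> nat \<Rightarrow> real) \<Rightarrow> (nat \<Rightarrow> nat \<times> nat) \<Rightarrow> real" where
  "grid_weight n \<rho> p x = (\<Prod>i<n. \<rho> (fst (x i)) * p (fst (x i)) (snd (x i)))"

lemma finite_grid_points: "finite (grid_points n S A)"
  unfolding grid_points_def by (intro finite_PiE) auto

lemma inj_on_noiseless_dataset: "inj_on (noiseless_dataset n r) (grid_points n S A)"
proof (rule inj_onI, rule ext)
  fix x y i
  assume x: "x \<in> grid_points n S A" and y: "y \<in> grid_points n S A"
    and eq: "noiseless_dataset n r x = noiseless_dataset n r y"
  show "x i = y i"
  proof (cases "i < n")
    case True
    then have "noiseless_dataset n r x i = noiseless_dataset n r y i" using eq by simp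
    then show ?thesis using True unfolding noiseless_dataset_def by (auto intro: prod_eqI)
  next
    case False
    then show ?thesis using x y unfolding grid_points_def by (auto simp: PiE_def extensional_def)
  qed
qed

lemma grid_weight_nonneg:
  assumes p: "\<forall>s. \<forall>a<A. 0 \<le> p s a" and rho: "\<forall>s<S. 0 \<le> \<rho> s" and x: "x \<in> grid_points n S A"
  shows "0 \<le> grid_weight n \<rho> p x"
  unfolding grid_weight_def using p rho x unfolding grid_points_def
  by (intro prod_nonneg) (force simp: PiE_def Pi_def mem_Times_iff)

lemma emeasure_noiseless_dataset:
  assumes p: "\<forall>s. (\<forall>a<A. 0 \<le> p s a) \<and> (\<Sum>a<A. p s a) = 1"
    and rho: "\<forall>s<S. 0 \<le> \<rho> s" "(\<Sum>s<S. \<rho> s) = 1"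
    and x: "x \<in> grid_points n S A"
  shows "emeasure (data_measure n S A r \<rho> p (return borel 0)) {noiseless_dataset n r x}
     = ennreal (grid_weight n \<rho> p x)"
proof -
  let ?M = "sample_measure S A r \<rho> p (return borel 0)"
  interpret product_sigma_finite "\<lambda>_::nat. ?M"
    unfolding product_sigma_finite_def
    using prob_space_imp_sigma_finite[OF prob_space_noiseless_sample[OF p rho]] by blast
  have "{noiseless_dataset n r x} = PiE {..<n} (\<lambda>i. {noiseless_dataset n r x i})"
    by (rule PiE_singleton[symmetric]) (simp add: noiseless_dataset_def)
  then have "emeasure (data_measure n S A r \<rho> p (return borel 0)) {noiseless_dataset n r x}
     = (\<Prod>i<n. emeasure ?M {noiseless_dataset n r x i})"
    unfolding data_measure_def
    by (simp add: emeasure_PiM sets_noiseless_sample singleton_sets_triple_space)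
  also have "\<dots> = (\<Prod>i<n. ennreal (\<rho> (fst (x i)) * p (fst (x i)) (snd (x i))))"
  proof (rule prod.cong[OF refl])
    fix i assume i: "i \<in> {..<n}"
    then have "x i \<in> {..<S} \<times> {..<A}" using x unfolding grid_points_def by auto
    then show "emeasure ?M {noiseless_dataset n r x i}
        = ennreal (\<rho> (fst (x i)) * p (fst (x i)) (snd (x i)))"
      using i by (auto simp: noiseless_dataset_def emeasure_noiseless_sample_singleton[OF p rho(1)])
  qed
  also have "\<dots> = ennreal (grid_weight n \<rho> p x)"
    unfolding grid_weight_def using p rho x unfolding grid_points_def
    by (subst prod_ennreal) (auto simp: PiE_def Pi_def)
  finally show ?thesis .
qed

lemma nn_integral_ge_grid_sum:
  assumes p: "\<forall>s. (\<forall>a<A. 0 \<le> p s a) \<and> (\<Sum>a<A. p s a) = 1"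
    and rho: "\<forall>s<S. 0 \<le> \<rho> s" "(\<Sum>s<S. \<rho> s) = 1"
    and G: "\<And>D. 0 \<le> G D"
  shows "ennreal (\<Sum>x\<in>grid_points n S A. grid_weight n \<rho> p x * G (noiseless_dataset n r x))
     \<le> (\<integral>\<^sup>+D. ennreal (G D) \<partial>data_measure n S A r \<rho> p (return borel 0))"
proof -
  let ?M = "data_measure n S A r \<rho> p (return borel 0)"
  let ?X = "grid_points n S A" and ?D = "noiseless_dataset n r"
  have sets: "{D} \<in> sets ?M" if "D \<in> ?D ` ?X" for D
  proof -
    have "PiE {..<n} (\<lambda>i. {D i}) \<in> sets ?M"
      unfolding data_measure_def
      by (rule sets_PiM_I_finite) (simp_all add: sets_noiseless_sample singleton_sets_triple_space)
    moreover have "D \<in> extensional {..<n}" using that by (auto simp: noiseless_dataset_def)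
    ultimately show ?thesis by (simp add: PiE_singleton)
  qed
  have "ennreal (\<Sum>x\<in>?X. grid_weight n \<rho> p x * G (?D x))
      = (\<Sum>x\<in>?X. ennreal (G (?D x)) * emeasure ?M {?D x})"
    using grid_weight_nonneg[of A p S \<rho>] p rho G
    by (auto simp: sum_ennreal[symmetric] emeasure_noiseless_dataset[OF p rho] ennreal_mult'
        mult.commute intro!: sum.cong simp del: sum_ennreal)
  also have "\<dots> = (\<Sum>D\<in>?D ` ?X. ennreal (G D) * emeasure ?M {D})"
    by (simp add: sum.reindex[OF inj_on_noiseless_dataset])
  also have "\<dots> = (\<integral>\<^sup>+D. ennreal (G D) * indicator (?D ` ?X) D \<partial>?M)"
    by (rule nn_integral_indicator_finite[symmetric]) (use finite_grid_points sets in auto)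
  also have "\<dots> \<le> (\<integral>\<^sup>+D. ennreal (G D) \<partial>?M)"
    by (intro nn_integral_mono) (auto simp: indicator_def)
  finally show ?thesis .
qed

section \<open>Suboptimality as a Bregman gap\<close>

definition ln_gap :: "real \<Rightarrow> real" where "ln_gap x = x - 1 - ln x"

lemma ln_gap_nonneg: "0 < x \<Longrightarrow> 0 \<le> ln_gap x"
  unfolding ln_gap_def using ln_le_minus_one[of x] by simp

text \<open>With y = x (u + v) / (2 u v) and z = 4 u v / (u + v)^2 we have ln (x / u) + ln (x / v) =
  2 ln y + ln z, and both logarithms are bounded by ln t \<le> t - 1.\<close>
lemma ln_gap_pair_ge:
  assumes x: "0 < x" and u: "0 < u" and v: "0 < v"
  shows "(u - v)^2 / (u + v)^2 \<le> ln_gap (x / u) + ln_gap (x / v)"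
proof -
  define w where "w = u + v"
  have w: "0 < w" unfolding w_def using u v by simp
  define y where "y = x * w / (2 * u * v)"
  define z where "z = 4 * u * v / w^2"
  have y: "0 < y" unfolding y_def using x u v w by simp
  have z: "0 < z" unfolding z_def using u v w by simp
  have "x / u * (x / v) = y^2 * z" unfolding y_def z_def using u v w
    by (simp add: field_simps power2_eq_square)
  moreover have "ln (x / u * (x / v)) = ln (x / u) + ln (x / v)"
    using x u v ln_mult[of "x / u" "x / v"] by (simp del: times_divide_eq_left times_divide_eq_right)
  moreover have "ln (y^2 * z) = 2 * ln y + ln z" using y z by (simp add: ln_mult ln_realpow)
  ultimately have "ln (x / u) + ln (x / v) = 2 * ln y + ln z" by simp
  moreover have "x / u + x / v = 2 * y" unfolding y_def w_def using u v by (simp add: field_simps)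
  moreover have "1 - z = (u - v)^2 / w^2"
  proof -
    have "(u - v)^2 = w^2 - 4 * u * v" unfolding w_def by (simp add: power2_eq_square algebra_simps)
    then show ?thesis unfolding z_def using w by (simp add: field_simps)
  qed
  ultimately show ?thesis
    unfolding ln_gap_def w_def using ln_le_minus_one[OF y] ln_le_minus_one[OF z] by linarith
qed

lemma ln_gap_pair_scaled_ge:
  assumes x: "0 < x" and c: "0 < c" and k: "0 < k"
  shows "(1 - k)^2 / (1 + k)^2 \<le> ln_gap (x / c) + ln_gap (x / (c * k))"
proof -
  have "(c - c * k)^2 = c^2 * (1 - k)^2" "(c + c * k)^2 = c^2 * (1 + k)^2"
    by (simp_all add: power2_eq_square algebra_simps)
  then show ?thesis using ln_gap_pair_ge[OF x c, of "c * k"] c k by simp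
qed

text \<open>The hypothesis on lam is the first-order condition for maximising
  \<Sum>a. r a * q a - KL A p q / \<eta> over the simplex, with Lagrange multiplier lam.\<close>
lemma regularized_value_gap:
  assumes eta: "0 < \<eta>"
    and pos: "\<forall>a<A. 0 < p a \<and> 0 < q a \<and> 0 < \<pi> a"
    and sum_q: "(\<Sum>a<A. q a) = 1" and sum_\<pi>: "(\<Sum>a<A. \<pi> a) = 1"
    and foc: "\<forall>a<A. r a + p a / (\<eta> * q a) = lam"
  shows "((\<Sum>a<A. r a * q a) - KL A p q / \<eta>) - ((\<Sum>a<A. r a * \<pi> a) - KL A p \<pi> / \<eta>)
     = (\<Sum>a<A. p a * ln_gap (\<pi> a / q a)) / \<eta>"
proof -
  have each: "(r a * q a - p a * ln (p a / q a) / \<eta>) - (r a * \<pi> a - p a * ln (p a / \<pi> a) / \<eta>)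
      = lam * (q a - \<pi> a) + p a * ln_gap (\<pi> a / q a) / \<eta>" if a: "a < A" for a
  proof -
    have pa: "0 < p a" and qa: "0 < q a" and \<pi>a: "0 < \<pi> a" using pos a by auto
    have ra: "r a = lam - p a / (\<eta> * q a)" using foc a by (simp add: algebra_simps)
    have "ln (p a / q a) - ln (p a / \<pi> a) = ln (\<pi> a / q a)"
      using pa qa \<pi>a by (simp add: ln_div)
    then have "p a * ln (p a / q a) / \<eta> - p a * ln (p a / \<pi> a) / \<eta> = p a * ln (\<pi> a / q a) / \<eta>"
      by (metis diff_divide_distrib right_diff_distrib)
    moreover have "r a * q a - r a * \<pi> a = lam * (q a - \<pi> a) + p a * (\<pi> a / q a - 1) / \<eta>"
      unfolding ra using qa eta by (simp add: field_simps)
    moreover have "p a * ln_gap (\<pi> a / q a) / \<eta> = p a * (\<pi> a / q a - 1) / \<eta> - p a * ln (\<pi> a / q a) / \<eta>"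
      unfolding ln_gap_def by (simp add: diff_divide_distrib right_diff_distrib)
    ultimately show ?thesis by linarith
  qed
  have "((\<Sum>a<A. r a * q a) - KL A p q / \<eta>) - ((\<Sum>a<A. r a * \<pi> a) - KL A p \<pi> / \<eta>)
     = (\<Sum>a<A. (r a * q a - p a * ln (p a / q a) / \<eta>) - (r a * \<pi> a - p a * ln (p a / \<pi> a) / \<eta>))"
    unfolding KL_def by (simp add: sum_subtractf sum_divide_distrib)
  also have "\<dots> = lam * (\<Sum>a<A. q a - \<pi> a) + (\<Sum>a<A. p a * ln_gap (\<pi> a / q a)) / \<eta>"
    using each by (simp add: sum.distrib sum_distrib_left sum_divide_distrib)
  also have "(\<Sum>a<A. q a - \<pi> a) = 0" using sum_q sum_\<pi> by (simp add: sum_subtractf)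
  finally show ?thesis by simp
qed

definition bregman_gap :: "nat \<Rightarrow> nat \<Rightarrow> real \<Rightarrow> (nat \<Rightarrow> real) \<Rightarrow> (nat \<Rightarrow> nat \<Rightarrow> real)
    \<Rightarrow> (nat \<Rightarrow> nat \<Rightarrow> real) \<Rightarrow> (nat \<Rightarrow> nat \<Rightarrow> real) \<Rightarrow> real" where
  "bregman_gap S A \<eta> \<rho> p q \<pi> = (\<Sum>s<S. \<rho> s * ((\<Sum>a<A. p s a * ln_gap (\<pi> s a / q s a)) / \<eta>))"

lemma J_diff_eq_bregman_gap:
  assumes eta: "0 < \<eta>"
    and p: "\<forall>s<S. \<forall>a<A. 0 < p s a" and q: "is_policy S A q" and \<pi>: "is_policy S A \<pi>"
    and foc: "\<forall>s<S. \<forall>a<A. r s a + p s a / (\<eta> * q s a) = lam s"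
  shows "J S A \<eta> r \<rho> p q - J S A \<eta> r \<rho> p \<pi> = bregman_gap S A \<eta> \<rho> p q \<pi>"
proof -
  have "J S A \<eta> r \<rho> p q - J S A \<eta> r \<rho> p \<pi>
     = (\<Sum>s<S. \<rho> s * (((\<Sum>a<A. r s a * q s a) - KL A (p s) (q s) / \<eta>)
         - ((\<Sum>a<A. r s a * \<pi> s a) - KL A (p s) (\<pi> s) / \<eta>)))"
    unfolding J_def by (simp add: sum_subtractf right_diff_distrib)
  also have "\<dots> = bregman_gap S A \<eta> \<rho> p q \<pi>"
    unfolding bregman_gap_def
  proof (rule sum.cong[OF refl])
    fix s assume "s \<in> {..<S}"
    then show "\<rho> s * (((\<Sum>a<A. r s a * q s a) - KL A (p s) (q s) / \<eta>)
         - ((\<Sum>a<A. r s a * \<pi> s a) - KL A (p s) (\<pi> s) / \<eta>))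
        = \<rho> s * ((\<Sum>a<A. p s a * ln_gap (\<pi> s a / q s a)) / \<eta>)"
      using regularized_value_gap[OF eta, of A "p s" "q s" "\<pi> s" "r s" "lam s"] p q \<pi> foc
      unfolding is_policy_def by simp
  qed
  finally show ?thesis .
qed

lemma bregman_gap_nonneg:
  assumes eta: "0 < \<eta>" and rho: "\<forall>s<S. 0 \<le> \<rho> s"
    and p: "\<forall>s<S. \<forall>a<A. 0 < p s a" and q: "is_policy S A q" and \<pi>: "is_policy S A \<pi>"
  shows "0 \<le> bregman_gap S A \<eta> \<rho> p q \<pi>"
  unfolding bregman_gap_def using eta rho p q \<pi>
  by (intro sum_nonneg mult_nonneg_nonneg divide_nonneg_pos ln_gap_nonneg divide_pos_pos)
     (auto simp: is_policy_def less_imp_le)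

lemma SubOpt_eq_bregman_gap:
  assumes eta: "0 < \<eta>" and rho: "\<forall>s<S. 0 \<le> \<rho> s"
    and p: "\<forall>s<S. \<forall>a<A. 0 < p s a" and q: "is_policy S A q" and \<pi>: "is_policy S A \<pi>"
    and foc: "\<forall>s<S. \<forall>a<A. r s a + p s a / (\<eta> * q s a) = lam s"
  shows "SubOpt S A \<eta> r \<rho> p \<pi> = bregman_gap S A \<eta> \<rho> p q \<pi>"
proof -
  have "(SUP \<pi>' \<in> {\<pi>'. is_policy S A \<pi>'}. J S A \<eta> r \<rho> p \<pi>') = J S A \<eta> r \<rho> p q"
  proof (rule cSup_eq_maximum)
    show "J S A \<eta> r \<rho> p q \<in> (\<lambda>\<pi>'. J S A \<eta> r \<rho> p \<pi>') ` {\<pi>'. is_policy S A \<pi>'}" using q by blast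
    fix y assume "y \<in> (\<lambda>\<pi>'. J S A \<eta> r \<rho> p \<pi>') ` {\<pi>'. is_policy S A \<pi>'}"
    then obtain \<pi>' where y: "y = J S A \<eta> r \<rho> p \<pi>'" and \<pi>': "is_policy S A \<pi>'" by blast
    show "y \<le> J S A \<eta> r \<rho> p q"
      using J_diff_eq_bregman_gap[OF eta p q \<pi>' foc, where \<rho>=\<rho>] bregman_gap_nonneg[OF eta rho p q \<pi>'] y
      by simp
  qed
  then show ?thesis
    unfolding SubOpt_def using J_diff_eq_bregman_gap[OF eta p q \<pi> foc, where \<rho>=\<rho>] by simp
qed

lemma subgaussian_noise_return_zero: "subgaussian_noise (return borel (0::real))"
proof -
  interpret P: prob_space "return borel (0::real)" by (rule prob_space_return) simp
  have integrable: "integrable (return borel (0::real)) f"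
    if "f \<in> borel_measurable borel" for f :: "real \<Rightarrow> real"
    using that by (intro P.integrable_const_bound[where B="norm (f 0)"]) (simp_all add: AE_return)
  show ?thesis unfolding subgaussian_noise_def
    by (auto intro!: integrable P.prob_space_axioms simp: integral_return)
qed

definition worst_case_risk ::
    "nat \<Rightarrow> nat \<Rightarrow> nat \<Rightarrow> real \<Rightarrow> ((nat \<Rightarrow> nat \<times> nat \<times> real) \<Rightarrow> nat \<Rightarrow> nat \<Rightarrow> real) \<Rightarrow> ennreal" where
  "worst_case_risk n S A \<eta> \<pi>hat =
     (SUP inst \<in> {(r, \<rho>, \<pi>ref, \<nu>). valid_instance S A r \<rho> \<pi>ref \<nu>}.
        (case inst of (r, \<rho>, \<pi>ref, \<nu>) \<Rightarrow> risk n S A \<eta> \<pi>hat r \<rho> \<pi>ref \<nu>))"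

lemma worst_case_risk_ge_grid_sum:
  assumes eta: "0 < \<eta>"
    and p: "\<forall>s. (\<forall>a<A. 0 < p s a) \<and> (\<Sum>a<A. p s a) = 1"
    and rho: "\<forall>s<S. 0 \<le> \<rho> s" "(\<Sum>s<S. \<rho> s) = 1"
    and r: "\<forall>s<S. \<forall>a<A. 0 \<le> r s a \<and> r s a \<le> 1"
    and q: "is_policy S A q"
    and foc: "\<forall>s<S. \<forall>a<A. r s a + p s a / (\<eta> * q s a) = lam s"
    and \<pi>hat: "\<And>D. is_policy S A (\<pi>hat D)"
  shows "ennreal (\<Sum>x\<in>grid_points n S A.
            grid_weight n \<rho> p x * bregman_gap S A \<eta> \<rho> p q (\<pi>hat (noiseless_dataset n r x)))
    \<le> worst_case_risk n S A \<eta> \<pi>hat"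
proof -
  have p_pos: "\<forall>s<S. \<forall>a<A. 0 < p s a" using p by auto
  have p_nonneg: "\<forall>s. (\<forall>a<A. 0 \<le> p s a) \<and> (\<Sum>a<A. p s a) = 1" using p by (auto intro: less_imp_le)
  have "valid_instance S A r \<rho> p (return borel 0)"
    unfolding valid_instance_def is_policy_def using r rho p subgaussian_noise_return_zero by auto
  then have "risk n S A \<eta> \<pi>hat r \<rho> p (return borel 0) \<le> worst_case_risk n S A \<eta> \<pi>hat"
    unfolding worst_case_risk_def by (intro SUP_upper2[where i="(r, \<rho>, p, return borel 0)"]) auto
  moreover have "ennreal (\<Sum>x\<in>grid_points n S A.
            grid_weight n \<rho> p x * bregman_gap S A \<eta> \<rho> p q (\<pi>hat (noiseless_dataset n r x)))
     \<le> risk n S A \<eta> \<pi>hat r \<rho> p (return borel 0)"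
    unfolding risk_def SubOpt_eq_bregman_gap[OF eta rho(1) p_pos q \<pi>hat foc]
    by (rule nn_integral_ge_grid_sum[OF p_nonneg rho bregman_gap_nonneg[OF eta rho(1) p_pos q \<pi>hat]])
  ultimately show ?thesis by (rule order_trans[rotated])
qed

section \<open>Two-point (tp) instances that differ on one rare action\<close>

definition point_context :: "nat \<Rightarrow> real" where
  "point_context s = (if s = 0 then 1 else 0)"

definition tp_ref :: "nat \<Rightarrow> real \<Rightarrow> nat \<Rightarrow> nat \<Rightarrow> real" where
  "tp_ref A q s a = (if a = 0 then 1 - (real A - 1) * q else q)"

definition tp_scale :: "real \<Rightarrow> real \<Rightarrow> real" where
  "tp_scale q t = (1 - q * (1 + t)) / (1 - q)"

definition tp_opt :: "nat \<Rightarrow> real \<Rightarrow> real \<Rightarrow> nat \<Rightarrow> nat \<Rightarrow> real" where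
  "tp_opt A q t s a = (if a = 1 then q * (1 + t) else tp_ref A q s a * tp_scale q t)"

definition tp_gap :: "real \<Rightarrow> real \<Rightarrow> real \<Rightarrow> real" where
  "tp_gap \<eta> q t = (1 / tp_scale q t - 1 / (1 + t)) / \<eta>"

text \<open>Only action 1 is rewarded, by the gap for which tp_opt satisfies the first-order
  condition. Action 0 earns nothing for every t, so data showing only action 0 do not depend on t.\<close>
definition tp_reward :: "real \<Rightarrow> real \<Rightarrow> real \<Rightarrow> nat \<Rightarrow> nat \<Rightarrow> real" where
  "tp_reward \<eta> q t s a = (if a = 1 then tp_gap \<eta> q t else 0)"

lemma sum_tp_ref:
  assumes "A \<ge> 2"
  shows "(\<Sum>a<A. tp_ref A q s a) = 1"
proof -
  have "(\<Sum>a<A. tp_ref A q s a) = tp_ref A q s 0 + (\<Sum>a\<in>{..<A} - {0}. q)"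
    using assms by (subst sum.remove[of _ 0]) (auto simp: tp_ref_def intro!: sum.cong)
  also have "(\<Sum>a\<in>{..<A} - {0}. q) = (real A - 1) * q" using assms by simp
  finally show ?thesis by (simp add: tp_ref_def)
qed

lemma sum_tp_opt:
  assumes "A \<ge> 2" "q < 1"
  shows "(\<Sum>a<A. tp_opt A q t s a) = 1"
proof -
  have "(\<Sum>a<A. tp_opt A q t s a)
      = q * (1 + t) + (\<Sum>a\<in>{..<A} - {1}. tp_ref A q s a) * tp_scale q t"
    using assms by (subst sum.remove[of _ 1]) (auto simp: tp_opt_def sum_distrib_right intro!: sum.cong)
  also have "(\<Sum>a\<in>{..<A} - {1}. tp_ref A q s a) = 1 - q"
    using sum_tp_ref[OF assms(1), of q s] assms(1) sum.remove[of "{..<A}" 1 "tp_ref A q s"]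
    by (simp add: tp_ref_def)
  finally show ?thesis using assms(2) by (simp add: tp_scale_def)
qed

lemma tp_ref_pos:
  assumes "0 < q" "(real A - 1) * q < 1"
  shows "0 < tp_ref A q s a"
  using assms by (simp add: tp_ref_def)

lemma tp_scale_pos:
  assumes "0 \<le> q" "0 \<le> t" "q * (1 + t) < 1"
  shows "0 < tp_scale q t"
proof -
  have "q \<le> q * (1 + t)" using assms by (simp add: algebra_simps)
  then show ?thesis using assms unfolding tp_scale_def by simp
qed

lemma is_policy_tp_opt:
  assumes A: "A \<ge> 2" and q: "0 < q" "(real A - 1) * q < 1" and t: "0 \<le> t" "q * (1 + t) < 1"
  shows "is_policy S A (tp_opt A q t)"
proof -
  have "q < 1" using q t by (smt (verit) mult_le_cancel_left1)
  then show ?thesis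
    unfolding is_policy_def using sum_tp_opt[OF A] tp_ref_pos[OF q] tp_scale_pos[OF _ t] q t
    by (auto simp: tp_opt_def)
qed

lemma tp_first_order:
  assumes eta: "0 < \<eta>" and q: "0 < q" "(real A - 1) * q < 1" and t: "0 \<le> t" "q * (1 + t) < 1"
  shows "tp_reward \<eta> q t s a + tp_ref A q s a / (\<eta> * tp_opt A q t s a) = 1 / (\<eta> * tp_scale q t)"
proof (cases "a = 1")
  case True
  have "q / (\<eta> * (q * (1 + t))) = 1 / (\<eta> * (1 + t))" using q t by simp
  then show ?thesis
    using True by (simp add: tp_reward_def tp_opt_def tp_gap_def tp_ref_def diff_divide_distrib)
next
  case False
  then show ?thesis
    using tp_ref_pos[OF q, of s a] tp_scale_pos[OF _ t] q eta
    by (simp add: tp_reward_def tp_opt_def)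
qed

lemma bregman_gap_point_context_ge:
  assumes eta: "0 < \<eta>" and A: "A \<ge> 2" and S: "S \<ge> 1"
    and p: "\<forall>a<A. 0 < p 0 a" and q: "is_policy S A q" and \<pi>: "is_policy S A \<pi>"
  shows "(p 0 0 * ln_gap (\<pi> 0 0 / q 0 0) + p 0 1 * ln_gap (\<pi> 0 1 / q 0 1)) / \<eta>
     \<le> bregman_gap S A \<eta> point_context p q \<pi>"
proof -
  have "bregman_gap S A \<eta> point_context p q \<pi> = (\<Sum>a<A. p 0 a * ln_gap (\<pi> 0 a / q 0 a)) / \<eta>"
    unfolding bregman_gap_def point_context_def using S
    by (simp add: if_distrib[of "\<lambda>c. c * _"] if_distrib[of "\<lambda>c. c / _"] cong: if_cong)
  moreover have "(\<Sum>a\<in>{0, 1}. p 0 a * ln_gap (\<pi> 0 a / q 0 a)) \<le> (\<Sum>a<A. p 0 a * ln_gap (\<pi> 0 a / q 0 a))"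
    using A S p q \<pi> unfolding is_policy_def
    by (intro sum_mono2) (auto intro!: mult_nonneg_nonneg ln_gap_nonneg simp: less_imp_le)
  ultimately show ?thesis using eta by (simp add: divide_right_mono)
qed

lemma worst_case_risk_ge_tp_instance:
  assumes eta: "0 < \<eta>" and A: "A \<ge> 2" and S: "S \<ge> 1"
    and q: "0 < q" "(real A - 1) * q < 1" and t: "0 \<le> t" "q * (1 + t) < 1"
    and gap: "0 \<le> tp_gap \<eta> q t" "tp_gap \<eta> q t \<le> 1"
    and \<pi>hat: "\<And>D. is_policy S A (\<pi>hat D)"
  shows "ennreal ((1 - (real A - 1) * q) ^ n * bregman_gap S A \<eta> point_context (tp_ref A q) (tp_opt A q t)
            (\<pi>hat (noiseless_dataset n (\<lambda>_ _. 0) (\<lambda>_\<in>{..<n}. (0, 0)))))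
    \<le> worst_case_risk n S A \<eta> \<pi>hat"
proof -
  let ?x0 = "\<lambda>_\<in>{..<n}. (0::nat, 0::nat)"
  let ?term = "\<lambda>x. grid_weight n point_context (tp_ref A q) x * bregman_gap S A \<eta> point_context
      (tp_ref A q) (tp_opt A q t) (\<pi>hat (noiseless_dataset n (tp_reward \<eta> q t) x))"
  have p: "\<forall>s. (\<forall>a<A. 0 < tp_ref A q s a) \<and> (\<Sum>a<A. tp_ref A q s a) = 1"
    using tp_ref_pos[OF q] sum_tp_ref[OF A] by blast
  have rho: "\<forall>s<S. 0 \<le> point_context s" "(\<Sum>s<S. point_context s) = 1"
    using S by (auto simp: point_context_def)
  have x0: "?x0 \<in> grid_points n S A" unfolding grid_points_def using S A by auto
  have "noiseless_dataset n (tp_reward \<eta> q t) ?x0 = noiseless_dataset n (\<lambda>_ _. 0) ?x0"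
    unfolding noiseless_dataset_def by (auto simp: tp_reward_def)
  moreover have "grid_weight n point_context (tp_ref A q) ?x0 = (1 - (real A - 1) * q) ^ n"
    unfolding grid_weight_def by (simp add: point_context_def tp_ref_def)
  ultimately have "(1 - (real A - 1) * q) ^ n * bregman_gap S A \<eta> point_context (tp_ref A q) (tp_opt A q t)
            (\<pi>hat (noiseless_dataset n (\<lambda>_ _. 0) ?x0)) = ?term ?x0"
    by simp
  also have "\<dots> \<le> (\<Sum>x\<in>grid_points n S A. ?term x)"
    using finite_grid_points p rho \<pi>hat grid_weight_nonneg[of A "tp_ref A q" S point_context]
      bregman_gap_nonneg[OF eta rho(1) _ is_policy_tp_opt[OF A q t]]
    by (intro member_le_sum[OF x0] mult_nonneg_nonneg) (auto simp: less_imp_le)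
  also have "ennreal \<dots> \<le> worst_case_risk n S A \<eta> \<pi>hat"
    using tp_first_order[OF eta q t] gap
    by (intro worst_case_risk_ge_grid_sum[OF eta p rho _ is_policy_tp_opt[OF A q t] _ \<pi>hat])
       (auto simp: tp_reward_def)
  finally show ?thesis by (simp add: ennreal_leI)
qed

lemma tp_bregman_pair_ge:
  assumes eta: "0 < \<eta>" and A: "A \<ge> 2" and S: "S \<ge> 1"
    and q: "0 < q" "(real A - 1) * q < 1" and t: "0 \<le> t" "q * (1 + t) < 1"
    and \<pi>: "is_policy S A \<pi>"
  shows "((1 - (real A - 1) * q) * (1 - tp_scale q t)^2 / (1 + tp_scale q t)^2 + q * t^2 / (2 + t)^2) / \<eta>
     \<le> bregman_gap S A \<eta> point_context (tp_ref A q) (tp_opt A q 0) \<pi>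
       + bregman_gap S A \<eta> point_context (tp_ref A q) (tp_opt A q t) \<pi>"
proof -
  define p0 where "p0 = 1 - (real A - 1) * q"
  define k where "k = tp_scale q t"
  have p0: "0 < p0" unfolding p0_def using q by simp
  have k: "0 < k" unfolding k_def using tp_scale_pos[OF _ t] q by simp
  have "q < 1" using q t by (smt (verit) mult_le_cancel_left1)
  then have k0: "tp_scale q 0 = 1" unfolding tp_scale_def by simp
  have t0: "0 \<le> (0::real)" "q * (1 + 0) < 1" using \<open>q < 1\<close> by auto
  have p: "\<forall>a<A. 0 < tp_ref A q 0 a" using tp_ref_pos[OF q] by blast
  obtain x y where x: "0 < x" "x = \<pi> 0 0" and y: "0 < y" "y = \<pi> 0 1"
    using \<pi> A S unfolding is_policy_def by auto
  have B0: "(p0 * ln_gap (x / p0) + q * ln_gap (y / q)) / \<eta>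
      \<le> bregman_gap S A \<eta> point_context (tp_ref A q) (tp_opt A q 0) \<pi>"
    using bregman_gap_point_context_ge[where p="tp_ref A q", OF eta A S p is_policy_tp_opt[OF A q t0] \<pi>] x y k0
    by (simp add: tp_opt_def tp_ref_def p0_def)
  have Bt: "(p0 * ln_gap (x / (p0 * k)) + q * ln_gap (y / (q * (1 + t)))) / \<eta>
      \<le> bregman_gap S A \<eta> point_context (tp_ref A q) (tp_opt A q t) \<pi>"
    using bregman_gap_point_context_ge[where p="tp_ref A q", OF eta A S p is_policy_tp_opt[OF A q t] \<pi>] x y
    by (simp add: tp_opt_def tp_ref_def p0_def k_def)
  have pair_x: "(1 - k)^2 / (1 + k)^2 \<le> ln_gap (x / p0) + ln_gap (x / (p0 * k))"
    using ln_gap_pair_scaled_ge[OF x(1) p0 k] .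
  have pair_y: "t^2 / (2 + t)^2 \<le> ln_gap (y / q) + ln_gap (y / (q * (1 + t)))"
    using ln_gap_pair_scaled_ge[OF y(1) q(1), of "1 + t"] t by (simp add: add.commute)
  have "p0 * ((1 - k)^2 / (1 + k)^2) + q * (t^2 / (2 + t)^2)
      \<le> (p0 * ln_gap (x / p0) + q * ln_gap (y / q))
        + (p0 * ln_gap (x / (p0 * k)) + q * ln_gap (y / (q * (1 + t))))"
    using mult_left_mono[OF pair_x, of p0] mult_left_mono[OF pair_y, of q] p0 q
    by (simp add: algebra_simps)
  then have "(p0 * ((1 - k)^2 / (1 + k)^2) + q * (t^2 / (2 + t)^2)) / \<eta>
      \<le> (p0 * ln_gap (x / p0) + q * ln_gap (y / q)) / \<eta>
        + (p0 * ln_gap (x / (p0 * k)) + q * ln_gap (y / (q * (1 + t)))) / \<eta>"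
    using eta by (simp add: divide_right_mono add_divide_distrib[symmetric])
  then show ?thesis unfolding p0_def[symmetric] k_def[symmetric] using B0 Bt by simp
qed

text \<open>With probability (1 - (A - 1) q)^n \<ge> 1 / 2 every sample is (0, 0), whose reward is 0
  for every t, so the estimator returns the same policy under the instances t and 0.\<close>
lemma worst_case_risk_ge_two_point:
  assumes eta: "0 < \<eta>" and A: "A \<ge> 2" and S: "S \<ge> 1" and n: "n \<ge> 1"
    and q: "0 < q" "(real A - 1) * q \<le> 1 / (2 * real n)" and t: "0 \<le> t" "q * (1 + t) < 1"
    and gap: "0 \<le> tp_gap \<eta> q t" "tp_gap \<eta> q t \<le> 1"
    and \<pi>hat: "\<And>D. is_policy S A (\<pi>hat D)"
  shows "ennreal (((1 - (real A - 1) * q) * (1 - tp_scale q t)^2 / (1 + tp_scale q t)^2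
            + q * t^2 / (2 + t)^2) / (4 * \<eta>))
    \<le> worst_case_risk n S A \<eta> \<pi>hat"
proof -
  define p0 where "p0 = 1 - (real A - 1) * q"
  define \<pi>0 where "\<pi>0 = \<pi>hat (noiseless_dataset n (\<lambda>_ _. 0) (\<lambda>_\<in>{..<n}. (0, 0)))"
  define B where "B t' = bregman_gap S A \<eta> point_context (tp_ref A q) (tp_opt A q t') \<pi>0" for t'
  have nq: "real n * ((real A - 1) * q) \<le> 1 / 2" using q(2) n by (simp add: field_simps)
  have "(real A - 1) * q \<le> real n * ((real A - 1) * q)" using n A q by simp
  then have q': "(real A - 1) * q < 1" using nq by linarith
  have "q < 1" using q t by (smt (verit) mult_le_cancel_left1)
  then have t0: "0 \<le> (0::real)" "q * (1 + 0) < 1" "tp_gap \<eta> q 0 = 0"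
    by (auto simp: tp_gap_def tp_scale_def)
  have "1 + real n * (- ((real A - 1) * q)) \<le> (1 + - ((real A - 1) * q)) ^ n"
    using q' by (intro Bernoulli_inequality) simp
  then have p0n: "1 / 2 \<le> p0 ^ n" unfolding p0_def using nq by simp
  have B_nonneg: "0 \<le> B t'" if "0 \<le> t'" "q * (1 + t') < 1" for t'
    unfolding B_def \<pi>0_def using tp_ref_pos[OF q(1) q'] \<pi>hat
    by (intro bregman_gap_nonneg[OF eta _ _ is_policy_tp_opt[OF A q(1) q' that]])
       (auto simp: point_context_def)
  define Z where "Z = (1 - (real A - 1) * q) * (1 - tp_scale q t)^2 / (1 + tp_scale q t)^2
    + q * t^2 / (2 + t)^2"
  have "Z / \<eta> \<le> B 0 + B t"
    unfolding Z_def B_def \<pi>0_def by (rule tp_bregman_pair_ge[OF eta A S q(1) q' t \<pi>hat])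
  moreover have "max (B 0) (B t) / 2 \<le> p0 ^ n * max (B 0) (B t)"
    using mult_right_mono[OF p0n, of "max (B 0) (B t)"] B_nonneg[OF t] by simp
  moreover have "Z / (4 * \<eta>) = Z / \<eta> / 4" by simp
  ultimately have "Z / (4 * \<eta>) \<le> p0 ^ n * max (B 0) (B t)" by linarith
  also have "ennreal (p0 ^ n * max (B 0) (B t)) \<le> worst_case_risk n S A \<eta> \<pi>hat"
    using worst_case_risk_ge_tp_instance[where \<pi>hat=\<pi>hat and n=n, OF eta A S q(1) q' t0(1,2) _ _ \<pi>hat]
      worst_case_risk_ge_tp_instance[where \<pi>hat=\<pi>hat and n=n, OF eta A S q(1) q' t gap \<pi>hat]
    unfolding B_def \<pi>0_def p0_def t0(3) by (simp add: max_def)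
  finally show ?thesis unfolding Z_def by (simp add: ennreal_leI)
qed

lemma worst_case_risk_ge_small_eta:
  assumes eta: "0 < \<eta>" "\<eta> \<le> 2" and A: "A \<ge> 2" and S: "S \<ge> 1" and n: "n \<ge> 32"
    and \<pi>hat: "\<And>D. is_policy S A (\<pi>hat D)"
  shows "ennreal (\<eta> / (800 * real A * real n)) \<le> worst_case_risk n S A \<eta> \<pi>hat"
proof -
  define q where "q = 1 / (2 * real n * real A)"
  define t where "t = \<eta> / 4"
  have "64 \<le> real n * real A" using mult_mono[of 32 "real n" 2 "real A"] n A by simp
  then have q: "0 < q" "q \<le> 1 / 128" unfolding q_def by (auto simp: field_simps)
  have Aq: "(real A - 1) * q \<le> 1 / (2 * real n)" unfolding q_def using A n by (simp add: field_simps)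
  have t: "0 \<le> t" "t \<le> 1 / 2" unfolding t_def using eta by auto
  have qt: "q * (1 + t) \<le> 3 / 256" using mult_mono[of q "1/128" "1 + t" "3/2"] q t by simp
  have inv_scale: "1 / tp_scale q t = 1 + q * t / (1 - q - q * t)"
    using qt q unfolding tp_scale_def by (simp add: field_simps)
  have "q \<le> 1 - q - q * t" using q qt by (simp add: algebra_simps)
  then have "0 < 1 - q - q * t" "q * t \<le> t * (1 - q - q * t)"
    using q mult_right_mono[of q "1 - q - q * t" t] t by (simp_all add: mult.commute)
  then have "0 \<le> q * t / (1 - q - q * t)" "q * t / (1 - q - q * t) \<le> t"
    using q t by (simp_all add: divide_le_eq)
  moreover have "1 - t \<le> 1 / (1 + t)" "1 / (1 + t) \<le> 1" using t by (auto simp: field_simps)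
  ultimately have "0 \<le> 1 / tp_scale q t - 1 / (1 + t)" "1 / tp_scale q t - 1 / (1 + t) \<le> \<eta>"
    unfolding inv_scale using t_def eta by linarith+
  then have gap: "0 \<le> tp_gap \<eta> q t" "tp_gap \<eta> q t \<le> 1"
    unfolding tp_gap_def using eta by (simp_all add: pos_divide_le_eq)
  have "q * t^2 / (5 / 2)^2 \<le> q * t^2 / (2 + t)^2"
    using q t power_mono[of "2 + t" "5 / 2" 2] by (intro divide_left_mono) auto
  moreover have "1 / (2 * real n) \<le> 1" using n by simp
  then have "0 \<le> (1 - (real A - 1) * q) * (1 - tp_scale q t)^2 / (1 + tp_scale q t)^2"
    using Aq by (intro divide_nonneg_nonneg mult_nonneg_nonneg) auto
  ultimately have "\<eta> / (800 * real A * real n)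
      \<le> ((1 - (real A - 1) * q) * (1 - tp_scale q t)^2 / (1 + tp_scale q t)^2
            + q * t^2 / (2 + t)^2) / (4 * \<eta>)"
    using eta n unfolding q_def t_def by (simp add: field_simps power2_eq_square)
  also have "ennreal \<dots> \<le> worst_case_risk n S A \<eta> \<pi>hat"
    using qt n by (intro worst_case_risk_ge_two_point[OF eta(1) A S _ q(1) Aq t(1) _ gap \<pi>hat]) auto
  finally show ?thesis by (simp add: ennreal_leI)
qed

lemma worst_case_risk_ge_large_eta:
  assumes eta: "2 < \<eta>" and A: "A \<ge> 2" and S: "S \<ge> 1" and n: "n \<ge> 32"
    and \<pi>hat: "\<And>D. is_policy S A (\<pi>hat D)"
  shows "ennreal (1 / (128 * \<eta>)) \<le> worst_case_risk n S A \<eta> \<pi>hat"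
proof -
  define q where "q = 1 / (2 * real n * real A)"
  define t where "t = 1 / (2 * q) - 1"
  have "64 \<le> real n * real A" using mult_mono[of 32 "real n" 2 "real A"] n A by simp
  then have q: "0 < q" "q \<le> 1 / 128" unfolding q_def by (auto simp: field_simps)
  have Aq: "(real A - 1) * q \<le> 1 / (2 * real n)" unfolding q_def using A n by (simp add: field_simps)
  have qt: "q * (1 + t) = 1 / 2" and t: "0 \<le> t" unfolding t_def using q by (simp_all add: field_simps)
  have scale: "tp_scale q t = 1 / (2 * (1 - q))" unfolding tp_scale_def qt using q by simp
  have "1 / (1 + t) = 2 * q" unfolding t_def using q by simp
  then have gap_eq: "tp_gap \<eta> q t = 2 * (1 - 2 * q) / \<eta>"
    unfolding tp_gap_def scale using q by (simp add: field_simps)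
  have gap: "0 \<le> tp_gap \<eta> q t" "tp_gap \<eta> q t \<le> 1"
    unfolding gap_eq using q eta by (simp_all add: pos_divide_le_eq)
  have "1 / (2 * real n) \<le> 1 / 2" using n by simp
  then have p0: "1 / 2 \<le> 1 - (real A - 1) * q" using Aq by linarith
  have "1 / 2 \<le> tp_scale q t" "tp_scale q t \<le> 3 / 5" unfolding scale using q by (simp_all add: field_simps)
  then have "(2 / 5)^2 / (8 / 5)^2 \<le> (1 - tp_scale q t)^2 / (1 + tp_scale q t)^2"
    by (intro frac_le power_mono) auto
  then have "1 / 2 * (1 / 16) \<le> (1 - (real A - 1) * q) * ((1 - tp_scale q t)^2 / (1 + tp_scale q t)^2)"
    using p0 by (intro mult_mono) (auto simp: power2_eq_square)
  then have "1 / 32 \<le> (1 - (real A - 1) * q) * (1 - tp_scale q t)^2 / (1 + tp_scale q t)^2"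
    by simp
  moreover have "0 \<le> q * t^2 / (2 + t)^2" using q t by simp
  ultimately have "1 / 32 \<le> (1 - (real A - 1) * q) * (1 - tp_scale q t)^2 / (1 + tp_scale q t)^2
            + q * t^2 / (2 + t)^2"
    by linarith
  then have "1 / 32 / (4 * \<eta>)
      \<le> ((1 - (real A - 1) * q) * (1 - tp_scale q t)^2 / (1 + tp_scale q t)^2
            + q * t^2 / (2 + t)^2) / (4 * \<eta>)"
    using eta by (intro divide_right_mono) auto
  then have "1 / (128 * \<eta>)
      \<le> ((1 - (real A - 1) * q) * (1 - tp_scale q t)^2 / (1 + tp_scale q t)^2
            + q * t^2 / (2 + t)^2) / (4 * \<eta>)"
    by simp
  also have "ennreal \<dots> \<le> worst_case_risk n S A \<eta> \<pi>hat"
    using qt n eta by (intro worst_case_risk_ge_two_point[OF _ A S _ q(1) Aq t _ gap \<pi>hat]) auto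
  finally show ?thesis by (simp add: ennreal_leI)
qed

section \<open>An Assouad hypercube of action pairs\<close>

lemma sum_lessThan_pairs: "(\<Sum>a<2 * (m::nat). f a) = (\<Sum>j<m. f (2 * j) + f (2 * j + 1))"
  by (induction m) (simp_all add: algebra_simps)

locale hypercube =
  fixes n S A :: nat and \<eta> :: real
  assumes A: "even A" "A \<ge> 2" and S: "S \<ge> 1" and eta: "0 < \<eta>" "\<eta> \<le> 2"
    and n: "16 * real S * real A < real n"
begin

text \<open>Every action outside the first pair of context 0 is sampled with probability 1 / (4 n);
  that pair absorbs the remaining mass. A sign \<sigma> (s, j) selects which action of pair j in
  context s is favoured: the optimum tilts the reference policy by 1 \<plusminus> tilt within the pair,
  and the rewards 1 / 2 \<plusminus> spread / 2 make the first-order condition hold.\<close>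

definition tilt :: real where "tilt = \<eta> / 4"

definition spread :: real where "spread = 1 / (\<eta> * (1 - tilt)) - 1 / (\<eta> * (1 + tilt))"

definition base_mass :: real where "base_mass = 1 - (real S - 1) * real A / (4 * real n)"

definition context_dist :: "nat \<Rightarrow> real" where
  "context_dist s = (if s = 0 then base_mass else real A / (4 * real n))"

definition small_prob :: real where "small_prob = 1 / (4 * real n * base_mass)"

definition ref_policy :: "nat \<Rightarrow> nat \<Rightarrow> real" where
  "ref_policy s a =
     (if s = 0 then if a div 2 = 0 then (1 - (real A - 2) * small_prob) / 2 else small_prob
      else 1 / real A)"

definition favoured :: "(nat \<times> nat \<Rightarrow> bool) \<Rightarrow> nat \<Rightarrow> nat \<Rightarrow> bool" where
  "favoured \<sigma> s a \<longleftrightarrow> (\<sigma> (s, a div 2) \<longleftrightarrow> even a)"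

definition reward :: "(nat \<times> nat \<Rightarrow> bool) \<Rightarrow> nat \<Rightarrow> nat \<Rightarrow> real" where
  "reward \<sigma> s a = (if favoured \<sigma> s a then 1 / 2 + spread / 2 else 1 / 2 - spread / 2)"

definition opt_policy :: "(nat \<times> nat \<Rightarrow> bool) \<Rightarrow> nat \<Rightarrow> nat \<Rightarrow> real" where
  "opt_policy \<sigma> s a = ref_policy s a * (if favoured \<sigma> s a then 1 + tilt else 1 - tilt)"

lemma sum_actions_pairs: "(\<Sum>a<A. f a) = (\<Sum>j<A div 2. f (2 * j) + f (2 * j + 1))"
  using sum_lessThan_pairs[where m="A div 2" and f=f] A by simp

lemma n_pos: "0 < real n"
  using n S A by (smt (verit) mult_nonneg_nonneg of_nat_0_le_iff)

lemma base_mass_ge: "63 / 64 \<le> base_mass"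
proof -
  have "(real S - 1) * real A / (4 * real n) \<le> real S * real A / (4 * real n)"
    using n_pos by (intro divide_right_mono) (auto simp: algebra_simps)
  also have "\<dots> \<le> 1 / 64" using n n_pos by (simp add: field_simps)
  finally show ?thesis unfolding base_mass_def by linarith
qed

lemma small_prob_pos: "0 < small_prob"
  unfolding small_prob_def using base_mass_ge n_pos by simp

lemma small_prob_mass: "(real A - 2) * small_prob \<le> 1 / 2"
proof -
  have "(real A - 2) * small_prob \<le> real A / (4 * real n * base_mass)"
    using small_prob_pos unfolding small_prob_def by (simp add: divide_right_mono)
  also have "\<dots> \<le> real A / (4 * real n * (1 / 2))"
    using base_mass_ge n_pos by (intro divide_left_mono mult_left_mono) auto
  also have "\<dots> \<le> 1 / 2"
  proof -
    have "real A \<le> real S * real A" using S mult_right_mono[of 1 "real S" "real A"] by simp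
    then show ?thesis using n n_pos by (simp add: field_simps)
  qed
  finally show ?thesis .
qed

lemma ref_policy_pos: "a < A \<Longrightarrow> 0 < ref_policy s a"
  unfolding ref_policy_def using small_prob_pos small_prob_mass A by auto

lemma ref_policy_odd: "ref_policy s (2 * j + 1) = ref_policy s (2 * j)"
  unfolding ref_policy_def by simp

lemma sum_ref_policy: "(\<Sum>a<A. ref_policy s a) = 1"
proof -
  define m where "m = A div 2"
  have m: "A = 2 * m" "m \<ge> 1" unfolding m_def using A by auto
  have "(\<Sum>a<A. ref_policy s a) = (\<Sum>j<m. 2 * ref_policy s (2 * j))"
    unfolding sum_actions_pairs ref_policy_odd m_def by simp
  also have "\<dots> = 1"
  proof (cases "s = 0")
    case True
    have "(\<Sum>j<m. 2 * ref_policy s (2 * j))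
        = (1 - (real A - 2) * small_prob) + (\<Sum>j\<in>{..<m} - {0}. 2 * small_prob)"
      using True m(2) by (subst sum.remove[of _ 0]) (auto simp: ref_policy_def)
    also have "\<dots> = 1" using m by (simp add: algebra_simps)
    finally show ?thesis .
  next
    case False
    then show ?thesis unfolding ref_policy_def using m by simp
  qed
  finally show ?thesis .
qed

lemma context_dist_nonneg: "0 \<le> context_dist s"
  unfolding context_dist_def using base_mass_ge by auto

lemma sum_context_dist: "(\<Sum>s<S. context_dist s) = 1"
proof -
  have "(\<Sum>s<S. context_dist s) = base_mass + (\<Sum>s\<in>{..<S} - {0}. real A / (4 * real n))"
    using S by (subst sum.remove[of _ 0]) (auto simp: context_dist_def)
  then show ?thesis using S unfolding base_mass_def by simp
qed

lemma tilt_bounds: "0 < tilt" "tilt \<le> 1 / 2"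
  unfolding tilt_def using eta by auto

lemma spread_bounds: "0 \<le> spread" "spread \<le> 1"
proof -
  have t: "0 < 1 - tilt" "0 < 1 + tilt" using tilt_bounds by auto
  have "spread = (1 + tilt - (1 - tilt)) / (\<eta> * (1 - tilt) * (1 + tilt))"
    unfolding spread_def using t eta by (simp add: divide_simps)
  also have "\<dots> = (1 / 2) / ((1 - tilt) * (1 + tilt))"
    using t eta unfolding tilt_def by simp
  finally have spread: "spread = (1 / 2) / ((1 - tilt) * (1 + tilt))" .
  have "tilt^2 \<le> (1 / 2)^2" using tilt_bounds by (intro power_mono) auto
  then have "3 / 4 \<le> (1 - tilt) * (1 + tilt)" by (simp add: algebra_simps power2_eq_square)
  then show "0 \<le> spread" "spread \<le> 1" unfolding spread by (simp_all add: field_simps)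
qed

lemma reward_bounds: "0 \<le> reward \<sigma> s a" "reward \<sigma> s a \<le> 1"
  unfolding reward_def using spread_bounds by auto

lemma first_order:
  assumes "a < A"
  shows "reward \<sigma> s a + ref_policy s a / (\<eta> * opt_policy \<sigma> s a)
    = 1 / 2 + spread / 2 + 1 / (\<eta> * (1 + tilt))"
proof -
  have p: "0 < ref_policy s a" using ref_policy_pos[OF assms] .
  have t: "0 < 1 - tilt" "0 < 1 + tilt" using tilt_bounds by auto
  show ?thesis
  proof (cases "favoured \<sigma> s a")
    case True
    then show ?thesis using p t eta by (simp add: reward_def opt_policy_def)
  next
    case False
    have "ref_policy s a / (\<eta> * (ref_policy s a * (1 - tilt))) = 1 / (\<eta> * (1 - tilt))"
      using p by simp
    then have "reward \<sigma> s a + ref_policy s a / (\<eta> * opt_policy \<sigma> s a)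
        = 1 / 2 - spread / 2 + 1 / (\<eta> * (1 - tilt))"
      using False by (simp add: reward_def opt_policy_def)
    then show ?thesis using spread_def by linarith
  qed
qed

lemma is_policy_opt_policy: "is_policy S A (opt_policy \<sigma>)"
  unfolding is_policy_def
proof (intro allI impI conjI)
  fix s a assume "s < S" "a < A"
  then show "0 < opt_policy \<sigma> s a" using ref_policy_pos tilt_bounds by (simp add: opt_policy_def)
next
  fix s
  have "favoured \<sigma> s (2 * j + 1) \<longleftrightarrow> \<not> favoured \<sigma> s (2 * j)" for j
    unfolding favoured_def by simp
  then have "opt_policy \<sigma> s (2 * j) + opt_policy \<sigma> s (2 * j + 1)
      = ref_policy s (2 * j) + ref_policy s (2 * j + 1)" for j
    unfolding opt_policy_def ref_policy_odd by (auto simp: algebra_simps)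
  then show "(\<Sum>a<A. opt_policy \<sigma> s a) = 1"
    using sum_ref_policy[of s] unfolding sum_actions_pairs by simp
qed

definition cells :: "(nat \<times> nat) set" where
  "cells = ({..<S} \<times> {..<A div 2}) - {(0, 0)}"

definition signs :: "(nat \<times> nat \<Rightarrow> bool) set" where
  "signs = {\<sigma>. \<forall>k. k \<notin> cells \<longrightarrow> \<not> \<sigma> k}"

definition pair_gap :: "bool \<Rightarrow> nat \<Rightarrow> nat \<Rightarrow> (nat \<Rightarrow> nat \<Rightarrow> real) \<Rightarrow> real" where
  "pair_gap b s j \<pi> = context_dist s *
     (ref_policy s (2 * j)
        * ln_gap (\<pi> s (2 * j) / (ref_policy s (2 * j) * (if b then 1 + tilt else 1 - tilt)))
      + ref_policy s (2 * j + 1)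
        * ln_gap (\<pi> s (2 * j + 1) / (ref_policy s (2 * j + 1) * (if b then 1 - tilt else 1 + tilt))))
     / \<eta>"

lemma finite_cells: "finite cells"
  unfolding cells_def by simp

lemma finite_signs: "finite signs"
proof (rule finite_subset)
  show "signs \<subseteq> (\<lambda>B k. k \<in> B) ` Pow cells"
  proof
    fix \<sigma> assume "\<sigma> \<in> signs"
    then have "\<sigma> = (\<lambda>k. k \<in> {k. \<sigma> k})" "{k. \<sigma> k} \<in> Pow cells" unfolding signs_def by auto
    then show "\<sigma> \<in> (\<lambda>B k. k \<in> B) ` Pow cells" by blast
  qed
  show "finite ((\<lambda>B k. k \<in> B) ` Pow cells)" using finite_cells by simp
qed

lemma card_cells: "real (card cells) = real S * real A / 2 - 1"
proof -
  have A2: "A div 2 \<ge> 1" using A by auto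
  have "card cells = S * (A div 2) - 1"
    unfolding cells_def using S A2 by (simp add: card_Diff_singleton card_cartesian_product)
  moreover have "S * (A div 2) \<ge> 1" using S A2 by simp
  moreover have "real (A div 2) = real A / 2" using A by (auto elim: evenE)
  ultimately show ?thesis by simp
qed

lemma cell_weight:
  assumes "(s, j) \<in> cells"
  shows "context_dist s * ref_policy s (2 * j) = 1 / (4 * real n)"
proof (cases "s = 0")
  case True
  then have "j \<noteq> 0" using assms by (auto simp: cells_def)
  then show ?thesis using True base_mass_ge unfolding context_dist_def ref_policy_def small_prob_def by simp
next
  case False
  then show ?thesis using A unfolding context_dist_def ref_policy_def by simp
qed

lemma pair_gap_nonneg:
  assumes \<pi>: "is_policy S A \<pi>" and s: "s < S" and j: "j < A div 2"
  shows "0 \<le> pair_gap b s j \<pi>"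
proof -
  have a: "2 * j < A" "2 * j + 1 < A" using j A by auto
  show ?thesis
    unfolding pair_gap_def
    using \<pi> s a ref_policy_pos[OF a(1)] ref_policy_pos[OF a(2)] tilt_bounds eta context_dist_nonneg
    unfolding is_policy_def
    by (intro mult_nonneg_nonneg divide_nonneg_pos add_nonneg_nonneg ln_gap_nonneg divide_pos_pos mult_pos_pos)
       (auto intro: less_imp_le)
qed

lemma bregman_gap_ge_sum_pair_gap:
  assumes \<pi>: "is_policy S A \<pi>"
  shows "(\<Sum>k\<in>cells. pair_gap (\<sigma> k) (fst k) (snd k) \<pi>)
    \<le> bregman_gap S A \<eta> context_dist ref_policy (opt_policy \<sigma>) \<pi>"
proof -
  have "context_dist s * (ref_policy s (2 * j) * ln_gap (\<pi> s (2 * j) / opt_policy \<sigma> s (2 * j))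
          + ref_policy s (2 * j + 1) * ln_gap (\<pi> s (2 * j + 1) / opt_policy \<sigma> s (2 * j + 1))) / \<eta>
      = pair_gap (\<sigma> (s, j)) s j \<pi>" for s j
    unfolding pair_gap_def opt_policy_def favoured_def by (cases "\<sigma> (s, j)") simp_all
  then have "bregman_gap S A \<eta> context_dist ref_policy (opt_policy \<sigma>) \<pi>
      = (\<Sum>s<S. \<Sum>j<A div 2. pair_gap (\<sigma> (s, j)) s j \<pi>)"
    unfolding bregman_gap_def sum_actions_pairs
    by (simp add: sum_distrib_left sum_divide_distrib del: One_nat_def)
  also have "\<dots> = (\<Sum>k\<in>{..<S} \<times> {..<A div 2}. pair_gap (\<sigma> k) (fst k) (snd k) \<pi>)"
    by (subst sum.cartesian_product) (simp add: case_prod_beta)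
  also have "\<dots> \<ge> (\<Sum>k\<in>cells. pair_gap (\<sigma> k) (fst k) (snd k) \<pi>)"
    unfolding cells_def by (rule sum_mono2) (auto intro!: pair_gap_nonneg[OF \<pi>])
  finally show ?thesis .
qed

lemma pair_gap_flip_ge:
  assumes \<pi>: "is_policy S A \<pi>" and k: "(s, j) \<in> cells"
  shows "tilt^2 / (2 * real n * \<eta>) \<le> pair_gap True s j \<pi> + pair_gap False s j \<pi>"
proof -
  have s: "s < S" and a: "2 * j < A" "2 * j + 1 < A" using k A unfolding cells_def by auto
  define P where "P = ref_policy s (2 * j)"
  have P: "0 < P" unfolding P_def using ref_policy_pos[OF a(1)] .
  have t: "0 < 1 - tilt" "0 < 1 + tilt" using tilt_bounds by auto
  have pair: "tilt^2 \<le> ln_gap (z / (P * (1 + tilt))) + ln_gap (z / (P * (1 - tilt)))" if "0 < z" for z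
  proof -
    have "(P * (1 + tilt) - P * (1 - tilt))^2 = P^2 * (4 * tilt^2)"
      "(P * (1 + tilt) + P * (1 - tilt))^2 = P^2 * 4"
      by (simp_all add: power2_eq_square algebra_simps)
    then show ?thesis using ln_gap_pair_ge[OF that, of "P * (1 + tilt)" "P * (1 - tilt)"] P t by simp
  qed
  have "0 < \<pi> s (2 * j)" "0 < \<pi> s (2 * j + 1)" using \<pi> s a unfolding is_policy_def by auto
  then have "context_dist s * P * (tilt^2 + tilt^2) / \<eta>
      \<le> context_dist s * P *
          ((ln_gap (\<pi> s (2 * j) / (P * (1 + tilt))) + ln_gap (\<pi> s (2 * j) / (P * (1 - tilt))))
          + (ln_gap (\<pi> s (2 * j + 1) / (P * (1 + tilt)))
             + ln_gap (\<pi> s (2 * j + 1) / (P * (1 - tilt))))) / \<eta>"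
    using pair context_dist_nonneg P eta by (intro divide_right_mono mult_left_mono add_mono) auto
  also have "\<dots> = pair_gap True s j \<pi> + pair_gap False s j \<pi>"
    unfolding pair_gap_def ref_policy_odd P_def[symmetric] by (simp add: algebra_simps add_divide_distrib)
  finally show ?thesis
    unfolding cell_weight[OF k, folded P_def] using n_pos by (simp add: field_simps)
qed

definition avoiding :: "nat \<times> nat \<Rightarrow> (nat \<Rightarrow> nat \<times> nat) set" where
  "avoiding k = {x \<in> grid_points n S A. \<forall>i<n. (fst (x i), snd (x i) div 2) \<noteq> k}"

lemma avoiding_weight_ge:
  assumes k: "k \<in> cells"
  shows "1 / 2 \<le> (\<Sum>x\<in>avoiding k. grid_weight n context_dist ref_policy x)"
proof -
  obtain s j where k_eq: "k = (s, j)" by (cases k) auto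
  have s: "s < S" and a: "2 * j < A" "2 * j + 1 < A" using k A unfolding k_eq cells_def by auto
  define U where "U = {..<S} \<times> {..<A}"
  define Uk where "Uk = {u :: nat \<times> nat. (fst u, snd u div 2) = k}"
  define w where "w u = context_dist (fst u) * ref_policy (fst u) (snd u)" for u
  have "avoiding k = PiE {..<n} (\<lambda>_. U - Uk)"
    unfolding avoiding_def grid_points_def U_def Uk_def by (auto simp: PiE_def Pi_def)
  then have "(\<Sum>x\<in>avoiding k. grid_weight n context_dist ref_policy x) = (\<Prod>i<n. \<Sum>u\<in>U - Uk. w u)"
    unfolding grid_weight_def w_def U_def by (subst prod_sum_PiE) auto
  also have "\<dots> = (\<Sum>u\<in>U - Uk. w u) ^ n" by simp
  finally have eq: "(\<Sum>x\<in>avoiding k. grid_weight n context_dist ref_policy x) = (\<Sum>u\<in>U - Uk. w u) ^ n" .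
  have "(\<Sum>u\<in>U. w u) = (\<Sum>s<S. \<Sum>a<A. context_dist s * ref_policy s a)"
    unfolding U_def w_def by (subst sum.cartesian_product) (simp add: case_prod_beta)
  then have sum_U: "(\<Sum>u\<in>U. w u) = 1"
    by (simp add: sum_distrib_left[symmetric] sum_ref_policy sum_context_dist)
  have "U \<inter> Uk = {(s, 2 * j), (s, 2 * j + 1)}" unfolding U_def Uk_def k_eq using s a by auto
  then have sum_Uk: "(\<Sum>u\<in>U \<inter> Uk. w u) = 1 / (2 * real n)"
    unfolding w_def using cell_weight[OF k[unfolded k_eq]] by (simp add: ref_policy_odd[simplified])
  have "(\<Sum>u\<in>U. w u) = (\<Sum>u\<in>U \<inter> Uk. w u) + (\<Sum>u\<in>U - Uk. w u)"
    by (rule sum.Int_Diff) (simp add: U_def)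
  then have "(\<Sum>u\<in>U - Uk. w u) = 1 + (- (1 / (2 * real n)))" using sum_U sum_Uk by simp
  moreover have "1 + real n * (- (1 / (2 * real n))) \<le> (1 + (- (1 / (2 * real n)))) ^ n"
    using n_pos by (intro Bernoulli_inequality) simp
  ultimately show ?thesis unfolding eq using n_pos by simp
qed

text \<open>Flipping the sign of a cell that the data avoid does not change the data, hence not the
  estimate, but exchanges the two terms of pair_gap_flip_ge.\<close>
lemma sum_signs_pair_gap_ge:
  assumes k: "(s, j) \<in> cells" and x: "x \<in> avoiding (s, j)" and \<pi>hat: "\<And>D. is_policy S A (\<pi>hat D)"
  shows "real (card signs) * (tilt^2 / (4 * real n * \<eta>))
     \<le> (\<Sum>\<sigma>\<in>signs. pair_gap (\<sigma> (s, j)) s j (\<pi>hat (noiseless_dataset n (reward \<sigma>) x)))"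
proof -
  define flip where "flip \<sigma> = \<sigma>((s, j) := \<not> \<sigma> (s, j))" for \<sigma> :: "nat \<times> nat \<Rightarrow> bool"
  define F where "F \<sigma> = pair_gap (\<sigma> (s, j)) s j (\<pi>hat (noiseless_dataset n (reward \<sigma>) x))" for \<sigma>
  define G where "G \<sigma> = pair_gap True s j (\<pi>hat (noiseless_dataset n (reward \<sigma>) x))
      + pair_gap False s j (\<pi>hat (noiseless_dataset n (reward \<sigma>) x))" for \<sigma>
  have same_data: "noiseless_dataset n (reward (flip \<sigma>)) x = noiseless_dataset n (reward \<sigma>) x" for \<sigma>
  proof -
    have "(fst (x i), snd (x i) div 2) \<noteq> (s, j)" if "i < n" for i
      using x that unfolding avoiding_def by auto
    then show ?thesis
      unfolding noiseless_dataset_def reward_def favoured_def flip_def by (intro restrict_ext) auto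
  qed
  have "(\<Sum>\<sigma>\<in>signs. F \<sigma>) = (\<Sum>\<sigma>\<in>signs. F (flip \<sigma>))"
    using k by (intro sum.reindex_bij_witness[of signs flip flip]) (auto simp: flip_def signs_def)
  then have "2 * (\<Sum>\<sigma>\<in>signs. F \<sigma>) = (\<Sum>\<sigma>\<in>signs. F \<sigma> + F (flip \<sigma>))"
    by (simp add: sum.distrib)
  also have "\<dots> = (\<Sum>\<sigma>\<in>signs. G \<sigma>)"
  proof (intro sum.cong refl)
    fix \<sigma>
    show "F \<sigma> + F (flip \<sigma>) = G \<sigma>"
      unfolding F_def G_def same_data by (cases "\<sigma> (s, j)") (simp_all add: flip_def)
  qed
  also have "\<dots> \<ge> (\<Sum>\<sigma>\<in>signs. tilt^2 / (2 * real n * \<eta>))"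
    unfolding G_def by (intro sum_mono pair_gap_flip_ge[OF \<pi>hat k])
  finally show ?thesis unfolding F_def using n_pos eta by (simp add: field_simps)
qed

lemma cell_average_ge:
  assumes k: "k \<in> cells" and \<pi>hat: "\<And>D. is_policy S A (\<pi>hat D)"
  shows "real (card signs) * (tilt^2 / (8 * real n * \<eta>))
    \<le> (\<Sum>x\<in>grid_points n S A. grid_weight n context_dist ref_policy x
         * (\<Sum>\<sigma>\<in>signs. pair_gap (\<sigma> k) (fst k) (snd k) (\<pi>hat (noiseless_dataset n (reward \<sigma>) x))))"
proof -
  let ?W = "grid_weight n context_dist ref_policy"
  let ?T = "\<lambda>x. \<Sum>\<sigma>\<in>signs. pair_gap (\<sigma> k) (fst k) (snd k) (\<pi>hat (noiseless_dataset n (reward \<sigma>) x))"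
  let ?c = "real (card signs) * (tilt^2 / (4 * real n * \<eta>))"
  have W: "0 \<le> ?W x" if "x \<in> grid_points n S A" for x
    using grid_weight_nonneg[OF _ _ that] ref_policy_pos context_dist_nonneg by (simp add: less_imp_le)
  have "0 \<le> ?c" using n_pos eta by simp
  then have "(1 / 2) * ?c \<le> (\<Sum>x\<in>avoiding k. ?W x) * ?c"
    using avoiding_weight_ge[OF k] by (intro mult_right_mono) auto
  also have "\<dots> = (\<Sum>x\<in>avoiding k. ?W x * ?c)" by (rule sum_distrib_right)
  also have "\<dots> \<le> (\<Sum>x\<in>avoiding k. ?W x * ?T x)"
  proof (intro sum_mono mult_left_mono)
    fix x assume x: "x \<in> avoiding k"
    show "?c \<le> ?T x"
      using sum_signs_pair_gap_ge[where \<pi>hat=\<pi>hat, of "fst k" "snd k" x, OF _ _ \<pi>hat] k x by simp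
    show "0 \<le> ?W x" using W x by (simp add: avoiding_def)
  qed
  also have "\<dots> \<le> (\<Sum>x\<in>grid_points n S A. ?W x * ?T x)"
    using k W \<pi>hat by (intro sum_mono2 finite_grid_points mult_nonneg_nonneg sum_nonneg pair_gap_nonneg)
      (auto simp: avoiding_def cells_def)
  finally show ?thesis by simp
qed

definition bayes_risk :: "((nat \<Rightarrow> nat \<times> nat \<times> real) \<Rightarrow> nat \<Rightarrow> nat \<Rightarrow> real) \<Rightarrow> (nat \<times> nat \<Rightarrow> bool) \<Rightarrow> real"
  where
  "bayes_risk \<pi>hat \<sigma> = (\<Sum>x\<in>grid_points n S A. grid_weight n context_dist ref_policy x *
     bregman_gap S A \<eta> context_dist ref_policy (opt_policy \<sigma>) (\<pi>hat (noiseless_dataset n (reward \<sigma>) x)))"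

lemma sum_bayes_risk_ge:
  assumes \<pi>hat: "\<And>D. is_policy S A (\<pi>hat D)"
  shows "real (card signs) * (real (card cells) * (tilt^2 / (8 * real n * \<eta>)))
    \<le> (\<Sum>\<sigma>\<in>signs. bayes_risk \<pi>hat \<sigma>)"
proof -
  let ?W = "grid_weight n context_dist ref_policy"
  let ?T = "\<lambda>\<sigma> x k. pair_gap (\<sigma> k) (fst k) (snd k) (\<pi>hat (noiseless_dataset n (reward \<sigma>) x))"
  have "real (card signs) * (real (card cells) * (tilt^2 / (8 * real n * \<eta>)))
      = (\<Sum>k\<in>cells. real (card signs) * (tilt^2 / (8 * real n * \<eta>)))"
    by simp
  also have "\<dots> \<le> (\<Sum>k\<in>cells. \<Sum>x\<in>grid_points n S A. ?W x * (\<Sum>\<sigma>\<in>signs. ?T \<sigma> x k))"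
    by (intro sum_mono cell_average_ge \<pi>hat)
  also have "\<dots> = (\<Sum>k\<in>cells. \<Sum>\<sigma>\<in>signs. \<Sum>x\<in>grid_points n S A. ?W x * ?T \<sigma> x k)"
    by (simp add: sum_distrib_left sum.swap[of _ "grid_points n S A"])
  also have "\<dots> = (\<Sum>\<sigma>\<in>signs. \<Sum>x\<in>grid_points n S A. \<Sum>k\<in>cells. ?W x * ?T \<sigma> x k)"
    by (subst sum.swap) (simp add: sum.swap[of _ cells])
  also have "\<dots> = (\<Sum>\<sigma>\<in>signs. \<Sum>x\<in>grid_points n S A. ?W x * (\<Sum>k\<in>cells. ?T \<sigma> x k))"
    by (simp add: sum_distrib_left)
  also have "\<dots> \<le> (\<Sum>\<sigma>\<in>signs. bayes_risk \<pi>hat \<sigma>)"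
    unfolding bayes_risk_def using grid_weight_nonneg[of A ref_policy S context_dist]
      ref_policy_pos context_dist_nonneg
    by (intro sum_mono mult_left_mono bregman_gap_ge_sum_pair_gap \<pi>hat) (auto simp: less_imp_le)
  finally show ?thesis .
qed

lemma worst_case_risk_ge_hypercube:
  assumes SA: "S * A \<ge> 4" and \<pi>hat: "\<And>D. is_policy S A (\<pi>hat D)"
  shows "ennreal (\<eta> * real S * real A / (512 * real n)) \<le> worst_case_risk n S A \<eta> \<pi>hat"
proof -
  let ?b = "real (card cells) * (tilt^2 / (8 * real n * \<eta>))"
  have "\<exists>\<sigma>\<in>signs. ?b \<le> bayes_risk \<pi>hat \<sigma>"
  proof (rule ccontr)
    assume "\<not> ?thesis"
    moreover have "(\<lambda>_. False) \<in> signs" by (simp add: signs_def)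
    ultimately have "(\<Sum>\<sigma>\<in>signs. bayes_risk \<pi>hat \<sigma>) < (\<Sum>\<sigma>\<in>signs. ?b)"
      using finite_signs by (intro sum_strict_mono) auto
    then show False using sum_bayes_risk_ge[where \<pi>hat=\<pi>hat, OF \<pi>hat] by simp
  qed
  then obtain \<sigma> where \<sigma>: "?b \<le> bayes_risk \<pi>hat \<sigma>" by blast
  have "4 \<le> real S * real A" using SA by (metis of_nat_mult of_nat_numeral of_nat_le_iff)
  then have "real S * real A / 4 \<le> real (card cells)" unfolding card_cells by linarith
  moreover have "tilt^2 / (8 * real n * \<eta>) = \<eta> / (128 * real n)"
    unfolding tilt_def using eta n_pos by (simp add: field_simps power2_eq_square)
  moreover have "0 \<le> \<eta> / (128 * real n)" using eta n_pos by simp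
  ultimately have "real S * real A / 4 * (\<eta> / (128 * real n)) \<le> ?b"
    by (metis mult_right_mono)
  then have le: "\<eta> * real S * real A / (512 * real n) \<le> bayes_risk \<pi>hat \<sigma>"
    using \<sigma> by (simp add: field_simps)
  have p: "\<forall>s. (\<forall>a<A. 0 < ref_policy s a) \<and> (\<Sum>a<A. ref_policy s a) = 1"
    using ref_policy_pos sum_ref_policy by blast
  have \<rho>: "\<forall>s<S. 0 \<le> context_dist s" "(\<Sum>s<S. context_dist s) = 1"
    using context_dist_nonneg sum_context_dist by blast+
  have r: "\<forall>s<S. \<forall>a<A. 0 \<le> reward \<sigma> s a \<and> reward \<sigma> s a \<le> 1"
    using reward_bounds by blast
  have foc: "\<forall>s<S. \<forall>a<A. reward \<sigma> s a + ref_policy s a / (\<eta> * opt_policy \<sigma> s a)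
      = (\<lambda>_. 1 / 2 + spread / 2 + 1 / (\<eta> * (1 + tilt))) s"
    using first_order by blast
  have "ennreal (bayes_risk \<pi>hat \<sigma>) \<le> worst_case_risk n S A \<eta> \<pi>hat"
    unfolding bayes_risk_def
    by (rule worst_case_risk_ge_grid_sum[where \<pi>hat=\<pi>hat, OF eta(1) p \<rho> r is_policy_opt_policy foc \<pi>hat])
  with le show ?thesis by (meson ennreal_leI order_trans)
qed

end

lemma worst_case_risk_lower_bound:
  assumes A: "even A" "A \<ge> 2" and S: "S \<ge> 1" and eta: "0 < \<eta>"
    and n: "16 * real S * real A < real n" "4 * \<eta>\<^sup>2 * real S * real A < real n"
    and \<pi>hat: "\<And>D. is_policy S A (\<pi>hat D)"
  shows "ennreal (1 / 8192 * \<eta> * real S * real A / real n) \<le> worst_case_risk n S A \<eta> \<pi>hat"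
proof -
  have "2 \<le> real S * real A" using mult_mono[of 1 "real S" 2 "real A"] S A by simp
  then have n32: "n \<ge> 32" and n_pos: "0 < real n" using n by linarith+
  show ?thesis
  proof (cases "2 < \<eta>")
    case True
    have "\<eta> * (\<eta> * real S * real A) * 4 \<le> real n" using n(2) by (simp add: power2_eq_square algebra_simps)
    then have "1 / 8192 * \<eta> * real S * real A / real n \<le> 1 / (128 * \<eta>)"
      using eta n_pos by (simp add: field_simps)
    then show ?thesis
      by (rule order_trans[OF ennreal_leI worst_case_risk_ge_large_eta[OF True A(2) S n32 \<pi>hat]])
  next
    case False
    consider "S * A \<ge> 4" | "S = 1" "A = 2"
    proof (cases "S = 1")
      case True
      moreover have "A = 2 \<or> A \<ge> 4" using A by (auto elim!: evenE)
      ultimately show ?thesis using that by auto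
    next
      case False
      then show ?thesis using that mult_le_mono[of 2 S 2 A] S A by simp
    qed
    then show ?thesis
    proof cases
      case 1
      interpret hypercube n S A \<eta> using A S eta False n(1) by unfold_locales auto
      show ?thesis using 1 eta n_pos
        by (intro order_trans[OF ennreal_leI worst_case_risk_ge_hypercube[OF _ \<pi>hat]])
          (simp_all add: field_simps)
    next
      case 2
      then show ?thesis using eta n_pos False n32 \<pi>hat
        by (intro order_trans[OF ennreal_leI worst_case_risk_ge_small_eta[OF _ _ A(2) S n32 \<pi>hat]])
          (auto simp: field_simps)
    qed
  qed
qed

theorem theorem4p1:
  "\<exists>c::real. c > 0 \<and>
    (\<forall>(A::nat) (S::nat) (\<eta>::real) (n::nat) \<pi>hat.
       even A \<and> A \<ge> 2 \<and> S \<ge> 1 \<and> \<eta> > 0 \<and>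
       real n > 16 * real S * real A \<and> real n > 4 * \<eta>\<^sup>2 * real S * real A \<and>
       estimator n S A \<pi>hat \<longrightarrow>
       (SUP inst \<in> {(r, \<rho>, \<pi>ref, \<nu>). valid_instance S A r \<rho> \<pi>ref \<nu>}.
          (case inst of (r, \<rho>, \<pi>ref, \<nu>) \<Rightarrow> risk n S A \<eta> \<pi>hat r \<rho> \<pi>ref \<nu>))
       \<ge> ennreal (c * \<eta> * real S * real A / real n))"
proof (rule exI[of _ "1 / 8192"], intro conjI allI impI)
  fix A S :: nat and \<eta> :: real and n :: nat and \<pi>hat
  assume "even A \<and> A \<ge> 2 \<and> S \<ge> 1 \<and> \<eta> > 0 \<and> real n > 16 * real S * real A \<and>
    real n > 4 * \<eta>\<^sup>2 * real S * real A \<and> estimator n S A \<pi>hat"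
  then show "ennreal (1 / 8192 * \<eta> * real S * real A / real n)
    \<le> (SUP inst \<in> {(r, \<rho>, \<pi>ref, \<nu>). valid_instance S A r \<rho> \<pi>ref \<nu>}.
          (case inst of (r, \<rho>, \<pi>ref, \<nu>) \<Rightarrow> risk n S A \<eta> \<pi>hat r \<rho> \<pi>ref \<nu>))"
    unfolding worst_case_risk_def[symmetric] estimator_def by (intro worst_case_risk_lower_bound) auto
qed simp

end
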